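(* Let $X$ be a real Banach space and let $A \subset X$ be a compact set not containing the zero vector. Let $I$ be an index set with $m$ elements and $\{x_i : i \in I\} \subset S_X$. Then there exist $y_i \in \mathbb{R}^+ x_i$ and $r_i > 0$ with $\|y_i\| \ge r_i$ for all $i \in I$ such that $\{B(y_i, r_i)\}_{i \in I}$ covers $A$, if and only if for every selection $\phi$ of the subdifferential mapping $\partial\|\cdot\|$, the family $\{\phi(x_i)\}_{i \in I}$ positively separates points of $A$, i.e. $\sup_{i \in I} \phi(x_i)(x) > 0$ for every $x \in A$.
   Context: $\mathbb{R}^+ x_i = \{ t x_i : t > 0\}$; $B(c,r) = \{ z : \|c - z\| < r\}$. The subdifferential of the norm at $x \ne 0$ is $\partial\|x\| = \{ x^* \in S_{X^*} : x^*(x) = \|x\|\}$. A selection of $\partial\|\cdot\|$ is a map $\phi$ assigning to each non-zero $x$ an element $\phi(x) \in \partial\|x\|$. *)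

theory Defs
  imports "HOL-Analysis.Analysis"
begin

text \<open>Elements of the dual unit sphere are represented as bounded linear
functionals of operator norm 1.  The subdifferential of the norm at x.\<close>
definition subdiff_norm :: "'a::real_normed_vector \<Rightarrow> ('a \<Rightarrow> real) set" where
  "subdiff_norm x = {f. bounded_linear f \<and> onorm f = 1 \<and> f x = norm x}"

definition subdiff_selection :: "('a::real_normed_vector \<Rightarrow> ('a \<Rightarrow> real)) \<Rightarrow> bool" where
  "subdiff_selection \<phi> \<longleftrightarrow> (\<forall>x. x \<noteq> 0 \<longrightarrow> \<phi> x \<in> subdiff_norm x)"

end

theory Submission
  imports Defs
begin

text \<open>If \<open>z \<in> B(t x, r)\<close> with \<open>t > 0\<close> and \<open>r \<le> t \<parallel>x\<parallel>\<close>, then every \<open>f \<in> \<partial>\<parallel>x\<parallel>\<close> satisfies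
  \<open>f z > 0\<close>, because \<open>f (t x) = \<parallel>t x\<parallel> > \<parallel>t x - z\<parallel> \<ge> f (t x - z)\<close>. Conversely, if \<open>z\<close> lies in
  no ball \<open>B(t x, t \<parallel>x\<parallel>)\<close>, then \<open>\<parallel>x - s z\<parallel> \<ge> \<parallel>x\<parallel>\<close> for all \<open>s > 0\<close>, and extending the
  functional \<open>t x \<mapsto> t \<parallel>x\<parallel>\<close> first to the direction \<open>-z\<close> with a nonnegative value and
  then, by Hahn--Banach, to the whole space gives \<open>f \<in> \<partial>\<parallel>x\<parallel>\<close> with \<open>f z \<le> 0\<close>; choosing
  such functionals at every \<open>x\<^sub>i\<close> yields a selection that fails to separate \<open>z\<close>. Finally the
  balls \<open>B(t x, t \<parallel>x\<parallel>)\<close> increase with \<open>t\<close>, so compactness of \<open>A\<close> gives one common \<open>t\<close>.\<close>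

text \<open>The graph of a linear functional on a subspace, dominated by the norm. Single-valuedness
  need not be required: it follows, since \<open>(0, s) \<in> G\<close> forces \<open>s \<le> 0\<close> and \<open>-s \<le> 0\<close>.\<close>

definition norm_dominated_graph :: "('a::real_normed_vector \<times> real) set \<Rightarrow> bool" where
  "norm_dominated_graph G \<longleftrightarrow> subspace G \<and> (\<forall>(u, r) \<in> G. r \<le> norm u)"

lemma norm_dominated_graph_le:
  "norm_dominated_graph G \<Longrightarrow> (u, r) \<in> G \<Longrightarrow> r \<le> norm u"
  unfolding norm_dominated_graph_def by blast

lemma norm_dominated_graph_unique:
  assumes G: "norm_dominated_graph G" and "(u, r) \<in> G" "(u, s) \<in> G"
  shows "r = s"
proof -
  have sub: "subspace G" using G unfolding norm_dominated_graph_def by blast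
  have "(0, r - s) \<in> G" "(0, s - r) \<in> G"
    using subspace_diff[OF sub assms(2,3)] subspace_diff[OF sub assms(3,2)] by simp_all
  then have "r - s \<le> 0" "s - r \<le> 0" using norm_dominated_graph_le[OF G] by fastforce+
  then show ?thesis by simp
qed

lemma norm_dominated_graph_extension_bounds:
  fixes w :: "'a::real_normed_vector"
  assumes G: "norm_dominated_graph G" and "(u, r) \<in> G"
  defines "c \<equiv> Inf {norm (u + w) - r | u r. (u, r) \<in> G}"
  shows "c \<le> norm (u + w) - r" and "r - norm (u - w) \<le> c"
proof -
  have sub: "subspace G" using G unfolding norm_dominated_graph_def by blast
  have below: "r' - norm (u' - w) \<le> norm (u + w) - r"
    if "(u, r) \<in> G" "(u', r') \<in> G" for u r u' r'
  proof -
    have "(u + u', r + r') \<in> G" using subspace_add[OF sub that] by simp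
    then have "r + r' \<le> norm (u + u')" by (rule norm_dominated_graph_le[OF G])
    also have "\<dots> \<le> norm (u + w) + norm (u' - w)"
      using norm_triangle_ineq[of "u + w" "u' - w"] by simp
    finally show ?thesis by simp
  qed
  have "(0, 0) \<in> G" using subspace_0[OF sub] by (simp add: zero_prod_def)
  then show "c \<le> norm (u + w) - r" "r - norm (u - w) \<le> c"
    unfolding c_def using assms(2) below
    by (auto intro!: cInf_lower cInf_greatest simp: bdd_below_def) blast+
qed

lemma norm_dominated_graph_extend:
  fixes w :: "'a::real_normed_vector"
  assumes G: "norm_dominated_graph G"
  defines "c \<equiv> Inf {norm (u + w) - r | u r. (u, r) \<in> G}"
  shows "norm_dominated_graph {p + q | p q. p \<in> G \<and> q \<in> span {(w, c)}}"
proof -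
  have sub: "subspace G" using G unfolding norm_dominated_graph_def by blast
  have "r + k * c \<le> norm (u + k *\<^sub>R w)" if "(u, r) \<in> G" for u r k
  proof (cases k "0 :: real" rule: linorder_cases)
    case less
    have "(- (1 / k) *\<^sub>R u, - (1 / k) * r) \<in> G"
      using subspace_scale[OF sub that, of "- (1 / k)"] by simp
    then have "- (1 / k) * r - norm (- (1 / k) *\<^sub>R u - w) \<le> c"
      unfolding c_def by (rule norm_dominated_graph_extension_bounds(2)[OF G])
    then have "- k * (- (1 / k) * r - norm (- (1 / k) *\<^sub>R u - w)) \<le> - k * c"
      using less by (intro mult_left_mono) auto
    also have "- k * (- (1 / k) * r - norm (- (1 / k) *\<^sub>R u - w)) = r - norm (u + k *\<^sub>R w)"
    proof -
      have "u + k *\<^sub>R w = (- k) *\<^sub>R (- (1 / k) *\<^sub>R u - w)" using less by (simp add: algebra_simps)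
      then have "norm (u + k *\<^sub>R w) = - k * norm (- (1 / k) *\<^sub>R u - w)" using less by simp
      then show ?thesis using less by (simp add: algebra_simps)
    qed
    finally show ?thesis by simp
  next
    case equal
    then show ?thesis using norm_dominated_graph_le[OF G that] by simp
  next
    case greater
    have "((1 / k) *\<^sub>R u, (1 / k) * r) \<in> G" using subspace_scale[OF sub that, of "1 / k"] by simp
    then have "c \<le> norm ((1 / k) *\<^sub>R u + w) - (1 / k) * r"
      unfolding c_def by (rule norm_dominated_graph_extension_bounds(1)[OF G])
    then have "k * c \<le> k * (norm ((1 / k) *\<^sub>R u + w) - (1 / k) * r)"
      using greater by (intro mult_left_mono) auto
    also have "\<dots> = norm (u + k *\<^sub>R w) - r"
    proof -
      have "u + k *\<^sub>R w = k *\<^sub>R ((1 / k) *\<^sub>R u + w)" using greater by (simp add: algebra_simps)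
      then have "norm (u + k *\<^sub>R w) = k * norm ((1 / k) *\<^sub>R u + w)" using greater by simp
      then show ?thesis using greater by (simp add: algebra_simps)
    qed
    finally show ?thesis by simp
  qed
  then show ?thesis
    unfolding norm_dominated_graph_def span_singleton
    using subspace_sums[OF sub subspace_span[of "{(w, c)}"]] by (auto simp: span_singleton)
qed

lemma norm_dominated_graph_Union_chain:
  assumes "C \<noteq> {}" and "\<forall>G\<in>C. norm_dominated_graph G"
    and chain: "\<forall>G\<in>C. \<forall>H\<in>C. G \<subseteq> H \<or> H \<subseteq> G"
  shows "norm_dominated_graph (\<Union>C)"
proof -
  have sub: "subspace G" if "G \<in> C" for G using assms(2) that unfolding norm_dominated_graph_def by blast
  have common: "\<exists>G\<in>C. p \<in> G \<and> q \<in> G" if "p \<in> \<Union>C" "q \<in> \<Union>C" for p q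
    using that chain by blast
  have "subspace (\<Union>C)"
    unfolding subspace_def
  proof (intro conjI ballI allI)
    show "0 \<in> \<Union>C" using assms(1) sub subspace_0 by blast
    show "p + q \<in> \<Union>C" if "p \<in> \<Union>C" "q \<in> \<Union>C" for p q
      using common[OF that] sub subspace_add by blast
    show "a *\<^sub>R p \<in> \<Union>C" if "p \<in> \<Union>C" for a p
      using that sub subspace_scale by blast
  qed
  then show ?thesis
    using assms(2) unfolding norm_dominated_graph_def by blast
qed

lemma norm_dominated_graph_maximal_total:
  assumes M: "norm_dominated_graph M" and max: "\<forall>X. norm_dominated_graph X \<longrightarrow> M \<subseteq> X \<longrightarrow> X = M"
  shows "\<exists>r. (u, r) \<in> M"
proof -
  define c where "c = Inf {norm (v + u) - r | v r. (v, r) \<in> M}"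
  define X where "X = {p + q | p q. p \<in> M \<and> q \<in> span {(u, c)}}"
  have "norm_dominated_graph X" unfolding X_def c_def by (rule norm_dominated_graph_extend[OF M])
  moreover have "M \<subseteq> X"
  proof
    fix p assume "p \<in> M"
    then have "p + 0 \<in> X" unfolding X_def using span_zero[of "{(u, c)}"] by blast
    then show "p \<in> X" by simp
  qed
  ultimately have "X = M" using max by blast
  moreover have "0 + (u, c) \<in> X"
    unfolding X_def using M span_base[of "(u, c)" "{(u, c)}"]
    unfolding norm_dominated_graph_def by (blast dest: subspace_0)
  ultimately show ?thesis by auto
qed

lemma norm_dominated_graph_hahn_banach:
  fixes G :: "('a::real_normed_vector \<times> real) set"
  assumes G: "norm_dominated_graph G"
  shows "\<exists>f. linear f \<and> (\<forall>u. f u \<le> norm u) \<and> (\<forall>(u, r)\<in>G. f u = r)"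
proof -
  let ?ext = "{X. norm_dominated_graph X \<and> G \<subseteq> X}"
  have "\<exists>M\<in>?ext. \<forall>X\<in>?ext. M \<subseteq> X \<longrightarrow> X = M"
  proof (rule subset_Zorn_nonempty)
    fix C assume "C \<noteq> {}" "subset.chain ?ext C"
    then show "\<Union>C \<in> ?ext"
      using norm_dominated_graph_Union_chain[of C] unfolding subset_chain_def by blast
  qed (use G in blast)
  then obtain M where M: "norm_dominated_graph M" "G \<subseteq> M"
    and max: "\<forall>X. norm_dominated_graph X \<longrightarrow> M \<subseteq> X \<longrightarrow> X = M"
    by auto
  define f where "f u = (THE r. (u, r) \<in> M)" for u
  have f_eq: "f u = r" if "(u, r) \<in> M" for u r
    unfolding f_def using that norm_dominated_graph_unique[OF M(1)] by blast
  have graph: "(u, f u) \<in> M" for u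
    using norm_dominated_graph_maximal_total[OF M(1) max, of u] f_eq by blast
  have sub: "subspace M" using M(1) unfolding norm_dominated_graph_def by blast
  have "linear f"
  proof (rule linearI)
    show "f (u + v) = f u + f v" for u v
      using subspace_add[OF sub graph graph, of u v] f_eq by simp
    show "f (a *\<^sub>R u) = a *\<^sub>R f u" for a u
      using subspace_scale[OF sub graph, of a u] f_eq by simp
  qed
  moreover have "f u \<le> norm u" for u using norm_dominated_graph_le[OF M(1) graph] .
  ultimately show ?thesis using M(2) f_eq by blast
qed

lemma subdiff_norm_le: "f \<in> subdiff_norm x \<Longrightarrow> f u \<le> norm u"
  unfolding subdiff_norm_def using onorm[of f u] by auto

lemma subdiff_normI:
  fixes f :: "'a::real_normed_vector \<Rightarrow> real"
  assumes f: "linear f" "\<forall>u. f u \<le> norm u" and x: "x \<noteq> 0" "f x = norm x"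
  shows "f \<in> subdiff_norm x"
proof -
  have abs_le: "norm (f u) \<le> norm u" for u
    using f(2)[rule_format, of u] f(2)[rule_format, of "- u"] linear_neg[OF f(1), of u] by auto
  have bl: "bounded_linear f"
    using f(1) abs_le by (auto intro!: bounded_linear_intro[where K = 1] linear_add linear_scale)
  have "onorm f \<le> 1" using abs_le by (intro onorm_bound) auto
  moreover have "norm x \<le> onorm f * norm x" using onorm[OF bl, of x] x by simp
  then have "1 \<le> onorm f" using x(1) by simp
  ultimately show ?thesis unfolding subdiff_norm_def using bl x by auto
qed

lemma subdiff_norm_scaleR:
  assumes "0 < t" shows "subdiff_norm (t *\<^sub>R x) = subdiff_norm x"
proof -
  have "f (t *\<^sub>R x) = norm (t *\<^sub>R x) \<longleftrightarrow> f x = norm x" if "bounded_linear f" for f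
    using linear_scale[OF bounded_linear.linear[OF that]] assms by simp
  then show ?thesis unfolding subdiff_norm_def by blast
qed

lemma subdiff_norm_pos_in_ball:
  assumes f: "f \<in> subdiff_norm y" and z: "z \<in> ball y (norm y)"
  shows "0 < f z"
proof -
  have "f y - f z = f (y - z)"
    using f unfolding subdiff_norm_def by (simp add: linear_diff bounded_linear.linear)
  also have "\<dots> \<le> norm (y - z)" by (rule subdiff_norm_le[OF f])
  also have "\<dots> < norm y" using z by (simp add: dist_norm)
  also have "\<dots> = f y" using f unfolding subdiff_norm_def by simp
  finally show ?thesis by simp
qed

lemma subdiff_norm_nonneg_direction:
  fixes x v :: "'a::real_normed_vector"
  assumes x: "x \<noteq> 0" and v: "\<forall>s>0. norm x \<le> norm (x + s *\<^sub>R v)"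
  shows "\<exists>f\<in>subdiff_norm x. 0 \<le> f v"
proof -
  define L where "L = span {(x, norm x)}"
  have "\<forall>(u, r)\<in>L. r \<le> norm u"
    unfolding L_def span_singleton by (auto intro: mult_right_mono)
  then have L: "norm_dominated_graph L"
    unfolding norm_dominated_graph_def L_def by simp
  define c where "c = Inf {norm (u + v) - r | u r. (u, r) \<in> L}"
  \<comment> \<open>the least value at \<open>v\<close> compatible with the norm bound; the hypothesis on \<open>v\<close> is exactly
    what makes it nonnegative\<close>
  have "0 \<le> c"
    unfolding c_def
  proof (rule cInf_greatest)
    show "{norm (u + v) - r | u r. (u, r) \<in> L} \<noteq> {}"
      using span_zero[of "{(x, norm x)}"] unfolding L_def zero_prod_def by blast
  next
    fix d assume "d \<in> {norm (u + v) - r | u r. (u, r) \<in> L}"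
    then obtain k where d: "d = norm (k *\<^sub>R x + v) - k * norm x"
      unfolding L_def span_singleton by auto
    show "0 \<le> d"
    proof (cases "0 < k")
      case True
      have "k *\<^sub>R x + v = k *\<^sub>R (x + (1 / k) *\<^sub>R v)" using True by (simp add: algebra_simps)
      then have "norm (k *\<^sub>R x + v) = k * norm (x + (1 / k) *\<^sub>R v)" using True by simp
      moreover have "norm x \<le> norm (x + (1 / k) *\<^sub>R v)" using v True by simp
      ultimately show ?thesis using d True by (simp add: mult_left_mono)
    next
      case False
      then have "k * norm x \<le> 0" by (simp add: mult_nonpos_nonneg)
      then show ?thesis using d norm_ge_zero[of "k *\<^sub>R x + v"] by linarith
    qed
  qed
  define E where "E = {p + q | p q. p \<in> L \<and> q \<in> span {(v, c)}}"
  obtain f where f: "linear f" "\<forall>u. f u \<le> norm u" and on_E: "\<forall>(u, r)\<in>E. f u = r"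
    using norm_dominated_graph_hahn_banach[OF norm_dominated_graph_extend[OF L, of v]]
    unfolding E_def c_def by blast
  have "(x, norm x) + 0 \<in> E" "0 + (v, c) \<in> E"
    unfolding E_def L_def by (blast intro: span_base span_zero)+
  then have "f x = norm x" "f v = c" using on_E by auto
  then show ?thesis using subdiff_normI[OF f x] \<open>0 \<le> c\<close> by auto
qed

lemma subdiff_norm_nonempty: "x \<noteq> 0 \<Longrightarrow> subdiff_norm x \<noteq> {}"
  using subdiff_norm_nonneg_direction[of x 0] by auto

lemma subdiff_norm_nonpos_off_ray_balls:
  fixes x z :: "'a::real_normed_vector"
  assumes x: "x \<noteq> 0" and z: "\<forall>t>0. z \<notin> ball (t *\<^sub>R x) (t * norm x)"
  shows "\<exists>f\<in>subdiff_norm x. f z \<le> 0"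
proof -
  have "norm x \<le> norm (x + s *\<^sub>R (- z))" if "0 < s" for s
  proof -
    have "\<not> dist ((1 / s) *\<^sub>R x) z < (1 / s) * norm x"
      using z[rule_format, of "1 / s"] that by (simp only: mem_ball) simp
    then have "(1 / s) * norm x \<le> norm ((1 / s) *\<^sub>R x - z)" by (simp add: dist_norm not_less)
    then have "s * ((1 / s) * norm x) \<le> s * norm ((1 / s) *\<^sub>R x - z)"
      using that by (intro mult_left_mono) auto
    moreover have "s *\<^sub>R ((1 / s) *\<^sub>R x - z) = x + s *\<^sub>R (- z)"
      using that by (simp add: algebra_simps)
    then have "s * norm ((1 / s) *\<^sub>R x - z) = norm (x + s *\<^sub>R (- z))"
      using that by (metis abs_of_pos norm_scaleR)
    ultimately show ?thesis using that by simp
  qed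
  then obtain f where "f \<in> subdiff_norm x" "0 \<le> f (- z)"
    using subdiff_norm_nonneg_direction[OF x] by blast
  moreover have "f (- z) = - f z"
    using \<open>f \<in> subdiff_norm x\<close> unfolding subdiff_norm_def by (simp add: linear_neg bounded_linear.linear)
  ultimately show ?thesis by auto
qed

lemma subdiff_selection_exists:
  assumes "\<forall>y\<in>S. \<exists>f\<in>subdiff_norm y. P y f"
  shows "\<exists>\<phi>. subdiff_selection \<phi> \<and> (\<forall>y\<in>S. P y (\<phi> y))"
proof -
  define \<phi> where
    "\<phi> y = (if y \<in> S then SOME f. f \<in> subdiff_norm y \<and> P y f else SOME f. f \<in> subdiff_norm y)" for y
  have "\<phi> y \<in> subdiff_norm y \<and> P y (\<phi> y)" if "y \<in> S" for y
    unfolding \<phi>_def using that assms someI_ex[of "\<lambda>f. f \<in> subdiff_norm y \<and> P y f"] by auto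
  moreover have "\<phi> y \<in> subdiff_norm y" if "y \<notin> S" "y \<noteq> 0" for y
    unfolding \<phi>_def using that subdiff_norm_nonempty some_in_eq by auto
  ultimately show ?thesis unfolding subdiff_selection_def by blast
qed

lemma subdiff_selection_pos_in_ray_ball:
  assumes \<phi>: "subdiff_selection \<phi>" and t: "0 < t"
    and z: "z \<in> ball (t *\<^sub>R x) r" and r: "r \<le> norm (t *\<^sub>R x)"
  shows "0 < \<phi> x z"
proof -
  have "x \<noteq> 0"
  proof
    assume "x = 0"
    then have "norm z < r" "r \<le> 0" using z r by auto
    then show False using norm_ge_zero[of z] by linarith
  qed
  then have "\<phi> x \<in> subdiff_norm (t *\<^sub>R x)"
    using \<phi> subdiff_norm_scaleR[OF t] unfolding subdiff_selection_def by blast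
  moreover have "z \<in> ball (t *\<^sub>R x) (norm (t *\<^sub>R x))" using z r by auto
  ultimately show ?thesis by (rule subdiff_norm_pos_in_ball)
qed

lemma in_ray_balls_if_selections_separate:
  fixes x :: "'i \<Rightarrow> 'a::real_normed_vector"
  assumes x: "\<forall>i\<in>I. x i \<noteq> 0" and pos: "\<forall>\<phi>. subdiff_selection \<phi> \<longrightarrow> (\<exists>i\<in>I. \<phi> (x i) z > 0)"
  shows "z \<in> (\<Union>i\<in>I. \<Union>t\<in>{0<..}. ball (t *\<^sub>R x i) (t * norm (x i)))"
proof (rule ccontr)
  assume off: "\<not> ?thesis"
  have "\<exists>f\<in>subdiff_norm (x i). f z \<le> 0" if "i \<in> I" for i
  proof (rule subdiff_norm_nonpos_off_ray_balls)
    show "x i \<noteq> 0" using x that by blast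
    show "\<forall>t>0. z \<notin> ball (t *\<^sub>R x i) (t * norm (x i))" using off that by blast
  qed
  then obtain \<phi> where \<phi>: "subdiff_selection \<phi>" "\<forall>y\<in>x ` I. \<phi> y z \<le> 0"
    using subdiff_selection_exists[of "x ` I" "\<lambda>_ f. f z \<le> 0"] by blast
  obtain i where "i \<in> I" "\<phi> (x i) z > 0" using pos \<phi>(1) by blast
  then show False using \<phi>(2) by fastforce
qed

lemma ball_ray_mono:
  fixes x :: "'a::real_normed_vector"
  assumes "s \<le> t"
  shows "ball (s *\<^sub>R x) (s * norm x) \<subseteq> ball (t *\<^sub>R x) (t * norm x)"
proof
  fix z assume "z \<in> ball (s *\<^sub>R x) (s * norm x)"
  then have "norm (s *\<^sub>R x - z) < s * norm x" by (simp add: dist_norm)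
  moreover have "t *\<^sub>R x - z = (s *\<^sub>R x - z) + (t - s) *\<^sub>R x" by (simp add: algebra_simps)
  then have "norm (t *\<^sub>R x - z) \<le> norm (s *\<^sub>R x - z) + norm ((t - s) *\<^sub>R x)"
    by (metis norm_triangle_ineq)
  moreover have "norm ((t - s) *\<^sub>R x) = (t - s) * norm x" using assms by simp
  ultimately show "z \<in> ball (t *\<^sub>R x) (t * norm x)" by (simp add: dist_norm algebra_simps)
qed

lemma compact_subset_ray_balls:
  fixes x :: "'i \<Rightarrow> 'a::real_normed_vector"
  assumes "compact A" and "A \<subseteq> (\<Union>i\<in>I. \<Union>t\<in>{0<..}. ball (t *\<^sub>R x i) (t * norm (x i)))"
  shows "\<exists>T>0. A \<subseteq> (\<Union>i\<in>I. ball (T *\<^sub>R x i) (T * norm (x i)))"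
proof -
  define U where "U t = (\<Union>i\<in>I. ball (t *\<^sub>R x i) (t * norm (x i)))" for t
  have "A \<subseteq> (\<Union>t\<in>{0<..}. U t)" using assms(2) unfolding U_def by blast
  moreover have "open (U t)" for t unfolding U_def by blast
  ultimately obtain C where C: "finite C" "A \<subseteq> (\<Union>t\<in>C. U t)"
    using compactE_image[OF assms(1), of "{0<..}" U] by metis
  define T where "T = Max (insert 1 C)"
  have "U t \<subseteq> U T" if "t \<in> C" for t
    using ball_ray_mono[of t T] that C(1) unfolding U_def T_def by fastforce
  moreover have "1 \<le> T" using C(1) unfolding T_def by (intro Max_ge) auto
  ultimately have "0 < T \<and> A \<subseteq> U T" using C(2) by fastforce
  then show ?thesis unfolding U_def by blast
qed

theorem mainTheorem8:
  fixes A :: "'a::banach set" and I :: "'i set" and x :: "'i \<Rightarrow> 'a" and m :: nat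
  assumes "compact A" and "0 \<notin> A"
    and "finite I" and "card I = m"
    and "\<forall>i\<in>I. norm (x i) = 1"
  shows "(\<exists>y r. (\<forall>i\<in>I. (\<exists>t>0. y i = t *\<^sub>R x i) \<and> r i > 0 \<and> norm (y i) \<ge> r i)
                \<and> A \<subseteq> (\<Union>i\<in>I. ball (y i) (r i)))
         \<longleftrightarrow> (\<forall>\<phi>. subdiff_selection \<phi> \<longrightarrow> (\<forall>z\<in>A. \<exists>i\<in>I. \<phi> (x i) z > 0))"
proof
  assume "\<exists>y r. (\<forall>i\<in>I. (\<exists>t>0. y i = t *\<^sub>R x i) \<and> r i > 0 \<and> norm (y i) \<ge> r i)
                \<and> A \<subseteq> (\<Union>i\<in>I. ball (y i) (r i))"
  then obtain y r where yr: "\<forall>i\<in>I. (\<exists>t>0. y i = t *\<^sub>R x i) \<and> norm (y i) \<ge> r i"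
    and cover: "A \<subseteq> (\<Union>i\<in>I. ball (y i) (r i))"
    by blast
  show "\<forall>\<phi>. subdiff_selection \<phi> \<longrightarrow> (\<forall>z\<in>A. \<exists>i\<in>I. \<phi> (x i) z > 0)"
  proof (intro allI impI ballI)
    fix \<phi> :: "'a \<Rightarrow> 'a \<Rightarrow> real" and z
    assume "subdiff_selection \<phi>" and "z \<in> A"
    moreover obtain i where "i \<in> I" "z \<in> ball (y i) (r i)" using cover \<open>z \<in> A\<close> by blast
    moreover obtain t where "0 < t" "y i = t *\<^sub>R x i" "r i \<le> norm (y i)" using yr \<open>i \<in> I\<close> by blast
    ultimately show "\<exists>i\<in>I. \<phi> (x i) z > 0" using subdiff_selection_pos_in_ray_ball by metis
  qed
next
  assume "\<forall>\<phi>. subdiff_selection \<phi> \<longrightarrow> (\<forall>z\<in>A. \<exists>i\<in>I. \<phi> (x i) z > 0)"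
  then have "A \<subseteq> (\<Union>i\<in>I. \<Union>t\<in>{0<..}. ball (t *\<^sub>R x i) (t * norm (x i)))"
    using in_ray_balls_if_selections_separate[of I x] assms(5) by fastforce
  then obtain T where "0 < T" "A \<subseteq> (\<Union>i\<in>I. ball (T *\<^sub>R x i) (T * norm (x i)))"
    using compact_subset_ray_balls[OF assms(1)] by blast
  then show "\<exists>y r. (\<forall>i\<in>I. (\<exists>t>0. y i = t *\<^sub>R x i) \<and> r i > 0 \<and> norm (y i) \<ge> r i)
                \<and> A \<subseteq> (\<Union>i\<in>I. ball (y i) (r i))"
    using assms(5) by (intro exI[of _ "\<lambda>i. T *\<^sub>R x i"] exI[of _ "\<lambda>_. T"]) auto
qed

end
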